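(* With respect to the box topology on $\mathcal{X}_*$, there is no continuous map $r\colon\mathcal{X}_*\to\mathbb{R}_+$ that is $1$-homogeneous, i.e. satisfies $r(tX)=t\,r(X)$ for all $t>0$ and $X\in\mathcal{X}_*$.
   Context: mm-spaces are triples $(X,d_X,\mu_X)$ with $(X,d_X)$ complete separable metric and $\mu_X$ a Borel probability measure, with $X=\operatorname{supp}\mu_X$. $\mathcal{X}$ is the set of their isomorphism classes under measure-preserving isometries of supports. Box distance: $\square(X,Y)$ is the infimum of $\varepsilon\ge0$ such that there exist Borel maps $\varphi,\psi$ from $[0,1)$ pushing Lebesgue measure to $\mu_X,\mu_Y$ and a Borel $I_0$ of measure $\ge1-\varepsilon$ with $|d_X(\varphi(s),\varphi(t))-d_Y(\psi(s),\psi(t))|\le\varepsilon$ on $I_0$. It induces the box topology. $tX=(X,t\,d_X,\mu_X)$ for $t\in\mathbb{R}_+=(0,\infty)$. $\mathcal{X}_*=\mathcal{X}\setminus\{*\}$, where $*$ is the one-point space. *)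

theory Defs
  imports "HOL-Analysis.Analysis" "HOL-Probability.Probability"
begin

text \<open>Every complete separable metric space has cardinality
at most that of the continuum, so every mm-space is isomorphic to one whose underlying set
is a subset of the reals (with an arbitrary metric d, not the usual one).\<close>

type_synonym mm = "real set \<times> (real \<Rightarrow> real \<Rightarrow> real) \<times> real measure"

definition mm_set :: "mm \<Rightarrow> real set" where "mm_set M = fst M"
definition mm_dist :: "mm \<Rightarrow> real \<Rightarrow> real \<Rightarrow> real" where "mm_dist M = fst (snd M)"
definition mm_meas :: "mm \<Rightarrow> real measure" where "mm_meas M = snd (snd M)"

definition mm_support :: "real set \<Rightarrow> (real \<Rightarrow> real \<Rightarrow> real) \<Rightarrow> real measure \<Rightarrow> real set" where
  "mm_support X d \<mu> = {x \<in> X. \<forall>r>0. emeasure \<mu> (Metric_space.mball X d x r) > 0}"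

definition mm_space :: "mm \<Rightarrow> bool" where
  "mm_space M \<longleftrightarrow>
     (let X = mm_set M; d = mm_dist M; \<mu> = mm_meas M in
       Metric_space X d \<and> Metric_space.mcomplete X d \<and>
       separable_space (Metric_space.mtopology X d) \<and>
       space \<mu> = X \<and>
       sets \<mu> = sigma_sets X {U. openin (Metric_space.mtopology X d) U} \<and>
       prob_space \<mu> \<and>
       mm_support X d \<mu> = X)"

definition one_point :: "mm \<Rightarrow> bool" where
  "one_point M \<longleftrightarrow> (\<exists>x. mm_set M = {x})"

definition mm_scale :: "real \<Rightarrow> mm \<Rightarrow> mm" where
  "mm_scale t M = (mm_set M, \<lambda>x y. t * mm_dist M x y, mm_meas M)"

definition unit_leb :: "real measure" where
  "unit_leb = restrict_space lborel {0..<1}"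

definition parameter :: "mm \<Rightarrow> (real \<Rightarrow> real) \<Rightarrow> bool" where
  "parameter M \<phi> \<longleftrightarrow> \<phi> \<in> measurable unit_leb (mm_meas M) \<and> distr unit_leb (mm_meas M) \<phi> = mm_meas M"

definition box :: "mm \<Rightarrow> mm \<Rightarrow> real" where
  "box M N = Inf {\<epsilon>. \<epsilon> \<ge> 0 \<and> (\<exists>\<phi> \<psi> I0. parameter M \<phi> \<and> parameter N \<psi> \<and>
        I0 \<in> sets lborel \<and> I0 \<subseteq> {0..<1} \<and> measure lborel I0 \<ge> 1 - \<epsilon> \<and>
        (\<forall>s\<in>I0. \<forall>t\<in>I0. \<bar>mm_dist M (\<phi> s) (\<phi> t) - mm_dist N (\<psi> s) (\<psi> t)\<bar> \<le> \<epsilon>))}"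

text \<open>Continuity w.r.t. the box topology on X_* (box is a metric on isomorphism classes,
so continuity is the epsilon-delta condition; a box-continuous function on representations is
automatically constant on isomorphism classes, since isomorphic spaces have box distance 0).\<close>
definition box_continuous_star :: "(mm \<Rightarrow> real) \<Rightarrow> bool" where
  "box_continuous_star r \<longleftrightarrow>
     (\<forall>M. mm_space M \<and> \<not> one_point M \<longrightarrow>
        (\<forall>\<epsilon>>0. \<exists>\<delta>>0. \<forall>N. mm_space N \<and> \<not> one_point N \<and> box M N < \<delta> \<longrightarrow> \<bar>r N - r M\<bar> < \<epsilon>))"

end

theory Submission
  imports Defs
begin

text \<open>Let \<open>Y\<close> be two points at distance 1 with mass 1/2 each, and let \<open>Z\<^sub>L\<close> arise from \<open>Y\<close>
by moving a small mass \<open>\<delta>\<close> of the second point to a new point at distance \<open>L\<close> from both.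
Uniformly in \<open>L\<close>, \<open>Z\<^sub>L\<close> is \<open>\<delta>\<close>-close to \<open>Y\<close> in the box distance, so continuity of \<open>r\<close> at \<open>Y\<close> bounds
\<open>r(Z\<^sub>L)\<close> for small \<open>\<delta>\<close>. On the other hand \<open>(1/L) Z\<^sub>L\<close> converges, as \<open>L \<rightarrow> \<infinity>\<close>, to the two-point
space \<open>W\<close> with masses \<open>1 - \<delta>, \<delta>\<close> at distance 1, whereas by homogeneity \<open>r((1/L) Z\<^sub>L) = r(Z\<^sub>L)/L \<rightarrow> 0\<close>.
Continuity at \<open>W\<close> then forces \<open>r(W) = 0\<close>.
Below, \<open>Y\<close>, \<open>Z\<^sub>L\<close> and \<open>W\<close> are \<^term>\<open>two_point (1/2)\<close>, \<^term>\<open>outlier_space \<delta> L\<close> and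
\<^term>\<open>two_point \<delta>\<close>.\<close>

definition finite_mm :: "real set \<Rightarrow> (real \<Rightarrow> real \<Rightarrow> real) \<Rightarrow> (real \<Rightarrow> real) \<Rightarrow> mm" where
  "finite_mm S d w = (S, d, point_measure S (\<lambda>x. ennreal (w x)))"

lemma mm_space_finite_mm:
  assumes fin: "finite S" and ms: "Metric_space S d"
    and w_pos: "\<And>x. x \<in> S \<Longrightarrow> w x > 0" and w_sum: "(\<Sum>x\<in>S. w x) = 1"
  shows "mm_space (finite_mm S d w)"
proof -
  interpret Metric_space S d by (rule ms)
  let ?\<mu> = "point_measure S (\<lambda>x. ennreal (w x))"
  have discrete: "mtopology = discrete_topology S"
    by (rule finite_t1_space_imp_discrete_topology)
       (use fin Hausdorff_space_mtopology Hausdorff_imp_t1_space in auto)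
  have "sigma_sets S {U. openin mtopology U} = Pow S"
    using sigma_algebra.sigma_sets_eq[OF sigma_algebra_Pow[of S]] by (simp add: discrete Pow_def)
  moreover have mcomplete
    by (rule compact_space_imp_mcomplete) (simp add: discrete compact_space_discrete_topology fin)
  moreover have "separable_space mtopology"
    by (simp add: discrete separable_space_discrete_topology countable_finite fin)
  moreover have "prob_space ?\<mu>"
    by (rule prob_space_point_measure) (use fin w_pos w_sum in \<open>auto simp: less_imp_le sum_ennreal\<close>)
  moreover have "mm_support S d ?\<mu> = S"
  proof -
    have "0 < emeasure ?\<mu> (mball x \<epsilon>)" if "x \<in> S" "\<epsilon> > 0" for x \<epsilon>
    proof -
      have "0 < emeasure ?\<mu> {x}"
        using emeasure_point_measure_finite2[of "{x}" S] that w_pos by simp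
      also have "\<dots> \<le> emeasure ?\<mu> (mball x \<epsilon>)"
        by (rule emeasure_mono) (use that in \<open>auto simp: sets_point_measure\<close>)
      finally show ?thesis .
    qed
    then show ?thesis unfolding mm_support_def by auto
  qed
  ultimately show ?thesis
    unfolding mm_space_def finite_mm_def mm_set_def mm_dist_def mm_meas_def Let_def
    using ms by (simp add: space_point_measure sets_point_measure)
qed

lemma parameter_finite_mm:
  assumes fin: "finite S" and into: "\<And>s. s \<in> {0..<1} \<Longrightarrow> \<phi> s \<in> S"
    and fibre_sets: "\<And>a. a \<in> S \<Longrightarrow> \<phi> -` {a} \<inter> {0..<1} \<in> sets lborel"
    and fibre_measure: "\<And>a. a \<in> S \<Longrightarrow> emeasure lborel (\<phi> -` {a} \<inter> {0..<1}) = w a"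
  shows "parameter (finite_mm S d w) \<phi>"
proof -
  let ?\<mu> = "point_measure S (\<lambda>x. ennreal (w x))"
  have space: "space unit_leb = {0..<1}" by (simp add: unit_leb_def)
  have meas: "\<phi> \<in> measurable unit_leb ?\<mu>"
    using fin into fibre_sets
    by (auto simp: space Pi_iff unit_leb_def sets_restrict_space_iff)
  have "distr unit_leb ?\<mu> \<phi> = ?\<mu>"
  proof (rule measure_eqI_finite[OF _ _ fin])
    fix a assume a: "a \<in> S"
    have "emeasure (distr unit_leb ?\<mu> \<phi>) {a} = emeasure unit_leb (\<phi> -` {a} \<inter> {0..<1})"
      using a meas by (subst emeasure_distr) (auto simp: sets_point_measure space)
    also have "\<dots> = emeasure lborel (\<phi> -` {a} \<inter> {0..<1})"
      unfolding unit_leb_def by (rule emeasure_restrict_space) auto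
    also have "\<dots> = emeasure ?\<mu> {a}"
      using emeasure_point_measure_finite2[of "{a}" S] a fibre_measure by simp
    finally show "emeasure (distr unit_leb ?\<mu> \<phi>) {a} = emeasure ?\<mu> {a}" .
  qed (simp_all add: sets_point_measure)
  with meas show ?thesis unfolding parameter_def finite_mm_def mm_meas_def by simp
qed

lemma mm_scale_one: "mm_scale 1 M = M"
  by (simp add: mm_scale_def mm_set_def mm_dist_def mm_meas_def)

lemma mm_scale_finite_mm: "mm_scale t (finite_mm S d w) = finite_mm S (\<lambda>x y. t * d x y) w"
  by (simp add: mm_scale_def finite_mm_def mm_set_def mm_dist_def mm_meas_def)

lemma one_point_finite_mm: "one_point (finite_mm S d w) \<longleftrightarrow> (\<exists>x. S = {x})"
  by (simp add: one_point_def finite_mm_def mm_set_def)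

lemma one_point_mm_scale: "one_point (mm_scale t M) \<longleftrightarrow> one_point M"
  by (simp add: one_point_def mm_scale_def mm_set_def)

lemma Metric_space_scale:
  assumes "Metric_space S d" "c > 0"
  shows "Metric_space S (\<lambda>x y. c * d x y)"
proof -
  interpret Metric_space S d by fact
  show ?thesis
    by unfold_locales (use assms(2) mdist_pos_eq commute triangle in \<open>auto simp: distrib_left[symmetric]\<close>)
qed

lemma box_le_witness:
  assumes "parameter M \<phi>" "parameter N \<psi>" "I0 \<in> sets lborel" "I0 \<subseteq> {0..<1}"
    and "measure lborel I0 \<ge> 1 - e" "e \<ge> 0"
    and "\<And>s t. s \<in> I0 \<Longrightarrow> t \<in> I0 \<Longrightarrow> \<bar>mm_dist M (\<phi> s) (\<phi> t) - mm_dist N (\<psi> s) (\<psi> t)\<bar> \<le> e"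
  shows "0 \<le> box M N" and "box M N \<le> e"
proof -
  let ?E = "{\<epsilon>. \<epsilon> \<ge> 0 \<and> (\<exists>\<phi> \<psi> I0. parameter M \<phi> \<and> parameter N \<psi> \<and>
        I0 \<in> sets lborel \<and> I0 \<subseteq> {0..<1} \<and> measure lborel I0 \<ge> 1 - \<epsilon> \<and>
        (\<forall>s\<in>I0. \<forall>t\<in>I0. \<bar>mm_dist M (\<phi> s) (\<phi> t) - mm_dist N (\<psi> s) (\<psi> t)\<bar> \<le> \<epsilon>))}"
  have "e \<in> ?E" using assms by blast
  then show "box M N \<le> e"
    unfolding box_def by (rule cInf_lower) (auto intro: bdd_belowI[of _ 0])
  from \<open>e \<in> ?E\<close> show "0 \<le> box M N"
    unfolding box_def by (intro cInf_greatest) auto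
qed

lemma box_continuous_star_tendsto:
  assumes cont: "box_continuous_star r" and M: "mm_space M" "\<not> one_point M"
    and N: "\<forall>\<^sub>F x in F. mm_space (N x) \<and> \<not> one_point (N x)"
    and box: "((\<lambda>x. box M (N x)) \<longlongrightarrow> 0) F"
  shows "((\<lambda>x. r (N x)) \<longlongrightarrow> r M) F"
proof (rule tendstoI)
  fix \<epsilon> :: real assume "\<epsilon> > 0"
  with cont M obtain \<delta> where "\<delta> > 0"
    and close: "\<And>N. mm_space N \<Longrightarrow> \<not> one_point N \<Longrightarrow> box M N < \<delta> \<Longrightarrow> \<bar>r N - r M\<bar> < \<epsilon>"
    unfolding box_continuous_star_def by blast
  from box \<open>\<delta> > 0\<close> have "\<forall>\<^sub>F x in F. dist (box M (N x)) 0 < \<delta>" by (rule tendstoD)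
  with N show "\<forall>\<^sub>F x in F. dist (r (N x)) (r M) < \<epsilon>"
    by eventually_elim (auto simp: dist_real_def intro: close)
qed

definition two_point :: "real \<Rightarrow> mm" where
  "two_point p = finite_mm {0, 1} (\<lambda>x y. \<bar>x - y\<bar>) (\<lambda>x. if x = 0 then 1 - p else p)"

definition two_point_param :: "real \<Rightarrow> real \<Rightarrow> real" where
  "two_point_param p s = (if s < 1 - p then 0 else 1)"

definition outlier_dist :: "real \<Rightarrow> real \<Rightarrow> real \<Rightarrow> real" where
  "outlier_dist L x y = (if x = y then 0 else if x = 2 \<or> y = 2 then L else 1)"

definition outlier_weight :: "real \<Rightarrow> real \<Rightarrow> real" where
  "outlier_weight \<delta> x = (if x = 0 then 1/2 else if x = 1 then 1/2 - \<delta> else \<delta>)"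

definition outlier_space :: "real \<Rightarrow> real \<Rightarrow> mm" where
  "outlier_space \<delta> L = finite_mm {0, 1, 2} (outlier_dist L) (outlier_weight \<delta>)"

definition outlier_param :: "real \<Rightarrow> real \<Rightarrow> real" where
  "outlier_param \<delta> s = (if s < 1/2 then 0 else if s < 1 - \<delta> then 1 else 2)"

lemma mm_space_two_point: "0 < p \<Longrightarrow> p < 1 \<Longrightarrow> mm_space (two_point p)"
  unfolding two_point_def by (rule mm_space_finite_mm) (unfold_locales, auto)

lemma not_one_point_two_point: "\<not> one_point (two_point p)"
  by (auto simp: two_point_def one_point_finite_mm doubleton_eq_iff)

lemma Metric_space_outlier_dist: "L \<ge> 1 \<Longrightarrow> Metric_space {0, 1, 2} (outlier_dist L)"
  by unfold_locales (auto simp: outlier_dist_def)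

lemma mm_space_scaled_outlier_space:
  assumes "0 < \<delta>" "\<delta> < 1/2" "L \<ge> 1" "t > 0"
  shows "mm_space (mm_scale t (outlier_space \<delta> L))"
  unfolding outlier_space_def mm_scale_finite_mm
proof (rule mm_space_finite_mm)
  show "Metric_space {0, 1, 2} (\<lambda>x y. t * outlier_dist L x y)"
    using assms by (intro Metric_space_scale Metric_space_outlier_dist) auto
qed (use assms in \<open>auto simp: outlier_weight_def\<close>)

lemma mm_space_outlier_space: "0 < \<delta> \<Longrightarrow> \<delta> < 1/2 \<Longrightarrow> L \<ge> 1 \<Longrightarrow> mm_space (outlier_space \<delta> L)"
  using mm_space_scaled_outlier_space[of \<delta> L 1] by (simp add: mm_scale_one)

lemma not_one_point_outlier_space: "\<not> one_point (outlier_space \<delta> L)"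
  by (auto simp: outlier_space_def one_point_finite_mm)

lemma parameter_two_point:
  assumes "0 < p" "p < 1"
  shows "parameter (two_point p) (two_point_param p)"
  unfolding two_point_def
proof (rule parameter_finite_mm)
  fix a :: real assume "a \<in> {0, 1}"
  then have "two_point_param p -` {a} \<inter> {0..<1} = (if a = 0 then {0..<1 - p} else {1 - p..<1})"
    using assms by (auto simp: two_point_param_def split: if_splits)
  then show "two_point_param p -` {a} \<inter> {0..<1} \<in> sets lborel"
    and "emeasure lborel (two_point_param p -` {a} \<inter> {0..<1}) = (if a = 0 then 1 - p else p)"
    using assms by simp_all
qed (auto simp: two_point_param_def)

lemma parameter_outlier_space:
  assumes "0 < \<delta>" "\<delta> < 1/2"
  shows "parameter (finite_mm {0, 1, 2} d (outlier_weight \<delta>)) (outlier_param \<delta>)"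
proof (rule parameter_finite_mm)
  fix a :: real assume "a \<in> {0, 1, 2}"
  then have "outlier_param \<delta> -` {a} \<inter> {0..<1} =
      (if a = 0 then {0..<1/2} else if a = 1 then {1/2..<1 - \<delta>} else {1 - \<delta>..<1})"
    using assms by (auto simp: outlier_param_def split: if_splits)
  then show "outlier_param \<delta> -` {a} \<inter> {0..<1} \<in> sets lborel"
    and "emeasure lborel (outlier_param \<delta> -` {a} \<inter> {0..<1}) = outlier_weight \<delta> a"
    using assms by (simp_all add: outlier_weight_def)
qed (auto simp: outlier_param_def)

lemma box_two_point_outlier_space:
  assumes "0 < \<delta>" "\<delta> < 1/2"
  shows "box (two_point (1/2)) (outlier_space \<delta> L) \<le> \<delta>"
proof (rule box_le_witness(2)[of _ "two_point_param (1/2)" _ "outlier_param \<delta>" "{0..<1 - \<delta>}"])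
  fix s t assume "s \<in> {0..<1 - \<delta>}" "t \<in> {0..<1 - \<delta>}"
  then show "\<bar>mm_dist (two_point (1/2)) (two_point_param (1/2) s) (two_point_param (1/2) t) -
      mm_dist (outlier_space \<delta> L) (outlier_param \<delta> s) (outlier_param \<delta> t)\<bar> \<le> \<delta>"
    using assms by (auto simp: mm_dist_def two_point_def outlier_space_def finite_mm_def
        two_point_param_def outlier_param_def outlier_dist_def)
qed (use assms in \<open>auto simp: parameter_two_point outlier_space_def parameter_outlier_space\<close>)

lemma box_two_point_scaled_outlier_space:
  assumes "0 < \<delta>" "\<delta> < 1/2" "L \<ge> 1"
  shows "0 \<le> box (two_point \<delta>) (mm_scale (1/L) (outlier_space \<delta> L))"
    and "box (two_point \<delta>) (mm_scale (1/L) (outlier_space \<delta> L)) \<le> 1/L"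
proof -
  have "parameter (two_point \<delta>) (two_point_param \<delta>)"
    using assms by (simp add: parameter_two_point)
  moreover have "parameter (mm_scale (1/L) (outlier_space \<delta> L)) (outlier_param \<delta>)"
    unfolding outlier_space_def mm_scale_finite_mm by (rule parameter_outlier_space[OF assms(1,2)])
  moreover have "\<bar>mm_dist (two_point \<delta>) (two_point_param \<delta> s) (two_point_param \<delta> t) -
      mm_dist (mm_scale (1/L) (outlier_space \<delta> L)) (outlier_param \<delta> s) (outlier_param \<delta> t)\<bar> \<le> 1/L"
    for s t
    using assms by (auto simp: mm_dist_def mm_scale_def two_point_def outlier_space_def finite_mm_def
        two_point_param_def outlier_param_def outlier_dist_def)
  ultimately show "0 \<le> box (two_point \<delta>) (mm_scale (1/L) (outlier_space \<delta> L))"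
    and "box (two_point \<delta>) (mm_scale (1/L) (outlier_space \<delta> L)) \<le> 1/L"
    using box_le_witness[of _ _ _ _ "{0..<1}" "1/L"] assms by auto
qed

lemma scaled_outlier_space_tendsto_two_point:
  assumes "0 < \<delta>" "\<delta> < 1/2"
  shows "((\<lambda>L. box (two_point \<delta>) (mm_scale (1/L) (outlier_space \<delta> L))) \<longlongrightarrow> 0) at_top"
proof (rule tendsto_sandwich)
  show "\<forall>\<^sub>F L in at_top. 0 \<le> box (two_point \<delta>) (mm_scale (1/L) (outlier_space \<delta> L))"
    using eventually_ge_at_top[of 1] by eventually_elim (rule box_two_point_scaled_outlier_space(1)[OF assms])
  show "\<forall>\<^sub>F L in at_top. box (two_point \<delta>) (mm_scale (1/L) (outlier_space \<delta> L)) \<le> 1/L"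
    using eventually_ge_at_top[of 1] by eventually_elim (rule box_two_point_scaled_outlier_space(2)[OF assms])
  show "((\<lambda>L::real. 1/L) \<longlongrightarrow> 0) at_top"
    by (intro tendsto_divide_0[OF tendsto_const] filterlim_at_top_imp_at_infinity filterlim_ident)
qed simp

lemma box_continuous_star_bounded_on_outlier_spaces:
  assumes "box_continuous_star r"
  obtains \<delta> C where "0 < \<delta>" "\<delta> < 1/2" "\<And>L. L \<ge> 1 \<Longrightarrow> r (outlier_space \<delta> L) \<le> C"
proof -
  have "mm_space (two_point (1/2))" "\<not> one_point (two_point (1/2))"
    by (simp_all add: mm_space_two_point not_one_point_two_point)
  with assms obtain \<delta>\<^sub>0 where "\<delta>\<^sub>0 > 0" and close: "\<And>N. mm_space N \<Longrightarrow> \<not> one_point N \<Longrightarrow>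
      box (two_point (1/2)) N < \<delta>\<^sub>0 \<Longrightarrow> \<bar>r N - r (two_point (1/2))\<bar> < 1"
    unfolding box_continuous_star_def using zero_less_one by blast
  define \<delta> where "\<delta> = min (\<delta>\<^sub>0/2) (1/4)"
  have \<delta>: "0 < \<delta>" "\<delta> < 1/2" "\<delta> < \<delta>\<^sub>0" using \<open>\<delta>\<^sub>0 > 0\<close> by (auto simp: \<delta>_def)
  have "r (outlier_space \<delta> L) \<le> r (two_point (1/2)) + 1" if "L \<ge> 1" for L
    using close[of "outlier_space \<delta> L"] box_two_point_outlier_space[OF \<delta>(1,2), of L] \<delta>(3)
      mm_space_outlier_space[OF \<delta>(1,2) that] not_one_point_outlier_space
    by fastforce
  with \<delta> show thesis using that by blast
qed

lemma box_continuous_star_tendsto_on_scaled_outlier_spaces: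
  assumes cont: "box_continuous_star r" and \<delta>: "0 < \<delta>" "\<delta> < 1/2"
  shows "((\<lambda>L. r (mm_scale (1/L) (outlier_space \<delta> L))) \<longlongrightarrow> r (two_point \<delta>)) at_top"
proof (rule box_continuous_star_tendsto[OF cont])
  show "mm_space (two_point \<delta>)" "\<not> one_point (two_point \<delta>)"
    using \<delta> by (simp_all add: mm_space_two_point not_one_point_two_point)
  show "\<forall>\<^sub>F L in at_top. mm_space (mm_scale (1/L) (outlier_space \<delta> L)) \<and>
      \<not> one_point (mm_scale (1/L) (outlier_space \<delta> L))"
    using eventually_ge_at_top[of 1] by eventually_elim
      (auto simp: one_point_mm_scale not_one_point_outlier_space intro!: mm_space_scaled_outlier_space \<delta>)
qed (rule scaled_outlier_space_tendsto_two_point[OF \<delta>])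

lemma homogeneous_tendsto_0_on_scaled_outlier_spaces:
  assumes pos: "\<And>M. mm_space M \<Longrightarrow> \<not> one_point M \<Longrightarrow> r M > 0"
    and hom: "\<And>M t. mm_space M \<Longrightarrow> \<not> one_point M \<Longrightarrow> t > 0 \<Longrightarrow> r (mm_scale t M) = t * r M"
    and \<delta>: "0 < \<delta>" "\<delta> < 1/2" and bound: "\<And>L. L \<ge> 1 \<Longrightarrow> r (outlier_space \<delta> L) \<le> C"
  shows "((\<lambda>L. r (mm_scale (1/L) (outlier_space \<delta> L))) \<longlongrightarrow> 0) at_top"
proof (rule tendsto_sandwich)
  show "\<forall>\<^sub>F L in at_top. 0 \<le> r (mm_scale (1/L) (outlier_space \<delta> L))"
    using eventually_ge_at_top[of 1] by eventually_elim
      (auto simp: one_point_mm_scale not_one_point_outlier_space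
        intro!: less_imp_le pos mm_space_scaled_outlier_space \<delta>)
  show "\<forall>\<^sub>F L in at_top. r (mm_scale (1/L) (outlier_space \<delta> L)) \<le> C / L"
    using eventually_ge_at_top[of 1]
  proof eventually_elim
    case (elim L)
    with hom[OF mm_space_outlier_space[OF \<delta> elim] not_one_point_outlier_space, of "1/L"] bound[OF elim]
    show ?case by (simp add: divide_right_mono)
  qed
  show "((\<lambda>L. C / L) \<longlongrightarrow> 0) at_top"
    by (intro tendsto_divide_0[OF tendsto_const] filterlim_at_top_imp_at_infinity filterlim_ident)
qed simp

theorem corollary3p9:
  shows "\<not> (\<exists>r :: mm \<Rightarrow> real.
            (\<forall>M. mm_space M \<and> \<not> one_point M \<longrightarrow> r M > 0) \<and>
            (\<forall>M t. mm_space M \<and> \<not> one_point M \<and> t > 0 \<longrightarrow> r (mm_scale t M) = t * r M) \<and>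
            box_continuous_star r)"
proof
  assume "\<exists>r :: mm \<Rightarrow> real. (\<forall>M. mm_space M \<and> \<not> one_point M \<longrightarrow> r M > 0) \<and>
            (\<forall>M t. mm_space M \<and> \<not> one_point M \<and> t > 0 \<longrightarrow> r (mm_scale t M) = t * r M) \<and>
            box_continuous_star r"
  then obtain r :: "mm \<Rightarrow> real" where
    pos: "\<And>M. mm_space M \<Longrightarrow> \<not> one_point M \<Longrightarrow> r M > 0" and
    hom: "\<And>M t. mm_space M \<Longrightarrow> \<not> one_point M \<Longrightarrow> t > 0 \<Longrightarrow> r (mm_scale t M) = t * r M" and
    cont: "box_continuous_star r" by blast
  obtain \<delta> C where \<delta>: "0 < \<delta>" "\<delta> < 1/2" and bound: "\<And>L. L \<ge> 1 \<Longrightarrow> r (outlier_space \<delta> L) \<le> C"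
    using box_continuous_star_bounded_on_outlier_spaces[OF cont] by blast
  have "((\<lambda>L. r (mm_scale (1/L) (outlier_space \<delta> L))) \<longlongrightarrow> r (two_point \<delta>)) at_top"
    by (rule box_continuous_star_tendsto_on_scaled_outlier_spaces[OF cont \<delta>])
  moreover have "((\<lambda>L. r (mm_scale (1/L) (outlier_space \<delta> L))) \<longlongrightarrow> 0) at_top"
    by (rule homogeneous_tendsto_0_on_scaled_outlier_spaces[OF pos hom \<delta> bound])
  ultimately have "r (two_point \<delta>) = 0" by (rule tendsto_unique[rotated]) simp
  with pos[of "two_point \<delta>"] \<delta> show False
    by (simp add: mm_space_two_point not_one_point_two_point)
qed

end
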